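(* Let $\Gamma=M\mathbb{Z}^n$ be a lattice in $\mathbb{R}^n$ (or $\mathbb{C}^n$), $M$ invertible, and let $A$ be a dilation matrix for $\Gamma$. Then there exists an integer $\beta\ge1$ such that $A^\beta$ yields a radix representation of $\Gamma$ with digit set $D_\beta=A^\beta(F_\Gamma)\cap\Gamma$, where $F_\Gamma=M([-\tfrac12,\tfrac12)^n)$; i.e. every $x\in\Gamma$ equals $\sum_{j=0}^N A^{\beta j}d_j$ for some $N\ge0$ and $d_j\in D_\beta$.
   Context: An integer dilation matrix is an $n\times n$ matrix with integer entries all of whose eigenvalues $\lambda$ satisfy $|\lambda|>1$. A matrix $A$ is a dilation matrix for $\Gamma=M\mathbb{Z}^n$ if $M^{-1}AM$ is an integer dilation matrix. *)

theory Defs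
  imports Complex_Main "Jordan_Normal_Form.Char_Poly"
begin

definition int_dilation_matrix :: "nat \<Rightarrow> int mat \<Rightarrow> bool" where
  "int_dilation_matrix n B \<longleftrightarrow> B \<in> carrier_mat n n \<and>
     (\<forall>k. eigenvalue (map_mat complex_of_int B) k \<longrightarrow> cmod k > 1)"

definition dilation_matrix_for :: "nat \<Rightarrow> 'a::field mat \<Rightarrow> 'a mat \<Rightarrow> bool" where
  "dilation_matrix_for n M A \<longleftrightarrow> M \<in> carrier_mat n n \<and> A \<in> carrier_mat n n \<and>
     (\<exists>Minv B. Minv \<in> carrier_mat n n \<and> Minv * M = 1\<^sub>m n \<and> M * Minv = 1\<^sub>m n \<and>
        int_dilation_matrix n B \<and> Minv * A * M = map_mat of_int B)"

definition lattice :: "nat \<Rightarrow> 'a::field mat \<Rightarrow> 'a vec set" where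
  "lattice n M = {M *\<^sub>v z | z. z \<in> carrier_vec n \<and> (\<forall>i<n. z $ i \<in> \<int>)}"

definition fund_dom :: "nat \<Rightarrow> 'a::real_field mat \<Rightarrow> 'a vec set" where
  "fund_dom n M = {M *\<^sub>v vec n (\<lambda>i. of_real (y i)) | y. \<forall>i<n. -1/2 \<le> y i \<and> y i < 1/2}"

definition digit_set :: "nat \<Rightarrow> 'a::real_field mat \<Rightarrow> 'a mat \<Rightarrow> nat \<Rightarrow> 'a vec set" where
  "digit_set n M A \<beta> = ((\<lambda>f. (A ^\<^sub>m \<beta>) *\<^sub>v f) ` fund_dom n M) \<inter> lattice n M"

end

theory Submission
  imports Defs "Jordan_Normal_Form.Spectral_Radius"
begin

(* Write A = M B' M^-1 with B' the image of an integer dilation matrix B.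
   Every complex eigenvalue of B has modulus > 1, so B is invertible over the reals and its
   real inverse C has all eigenvalues inside the unit disc.  By the Jordan-normal-form bound
   on the powers of a matrix of spectral radius < 1, the entries of C^beta tend to 0, so for
   some beta >= 1 all entries of P = C^beta are at most 1/(4n).
   With this beta we perform a "rounded division" by B^beta on integer vectors: for z in Z^n
   put q = round(P z) and e = z - B^beta q.  Then e = B^beta (P z - q) with P z - q in
   [-1/2,1/2)^n, so M e is a digit, and the small entries of P give max|q_i| < max|z_i|.
   Iterating z = e + B^beta q (induction on the sup-norm) yields the radix expansion, which
   is transported to the lattice via A^beta M = M B'^beta.
   The file first collects matrix-power algebra, then the spectral decay of C^beta, then the
   elementary facts about radix representations, the division step, and finally the theorem. *)

interpretation of_real_hom: semiring_hom "of_real :: real \<Rightarrow> 'a::real_algebra_1"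
  by (unfold_locales, auto)

section \<open>Algebra of matrix powers\<close>

text \<open>Exponent law for square matrices (the library only defines \<open>A ^\<^sub>m Suc k = A ^\<^sub>m k * A\<close>).\<close>

lemma pow_mat_add:
  assumes "A \<in> carrier_mat n n"
  shows "A ^\<^sub>m (k + l) = A ^\<^sub>m k * A ^\<^sub>m l"
proof (induct l)
  case 0 then show ?case using assms by simp
next
  case (Suc l)
  have "A ^\<^sub>m (k + Suc l) = (A ^\<^sub>m k * A ^\<^sub>m l) * A" using Suc by simp
  also have "\<dots> = A ^\<^sub>m k * (A ^\<^sub>m l * A)" using assms by (intro assoc_mult_mat) auto
  finally show ?case by simp
qed

lemma pow_smult_mat:
  assumes "(A :: 'a :: comm_ring_1 mat) \<in> carrier_mat n n"
  shows "(c \<cdot>\<^sub>m A) ^\<^sub>m k = (c ^ k) \<cdot>\<^sub>m (A ^\<^sub>m k)"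
proof (induct k)
  case 0 then show ?case using assms by (auto intro!: eq_matI)
next
  case (Suc k)
  have "(c \<cdot>\<^sub>m A) ^\<^sub>m Suc k = ((c ^ k) \<cdot>\<^sub>m (A ^\<^sub>m k)) * (c \<cdot>\<^sub>m A)" using Suc by simp
  also have "\<dots> = (c ^ Suc k) \<cdot>\<^sub>m (A ^\<^sub>m Suc k)"
    using assms by (simp add: mult_smult_assoc_mat mult_smult_distrib, intro eq_matI, auto)
  finally show ?case .
qed

lemma pow_inverse_mat:
  assumes A: "A \<in> carrier_mat n n" and C: "C \<in> carrier_mat n n"
    and AC: "A * C = 1\<^sub>m n" and CA: "C * A = 1\<^sub>m n"
  shows "A ^\<^sub>m k * C ^\<^sub>m k = 1\<^sub>m n"
proof (induct k)
  case 0 then show ?case using A C by simp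
next
  case (Suc k)
  have C_Suc: "C ^\<^sub>m Suc k = C * C ^\<^sub>m k" using pow_mat_add[OF C, of 1 k] C by simp
  have "A ^\<^sub>m Suc k * C ^\<^sub>m Suc k = A ^\<^sub>m k * ((A * C) * C ^\<^sub>m k)"
    unfolding C_Suc using A C
    by (simp add: assoc_mult_mat[of _ n n _ n _ n])
  also have "\<dots> = 1\<^sub>m n" using Suc A C AC by simp
  finally show ?case .
qed

text \<open>If \<open>A\<close> is conjugate to \<open>B'\<close> via \<open>M\<close>, so are all powers; this transports radix
  expansions between the coordinates of \<open>\<Gamma> = M \<int>\<^sup>n\<close> and \<open>\<Gamma>\<close> itself.\<close>

lemma conj_pow_mult_vec:
  assumes M: "M \<in> carrier_mat n n" and Minv: "Minv \<in> carrier_mat n n"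
    and A: "A \<in> carrier_mat n n" and MMinv: "M * Minv = 1\<^sub>m n"
    and conj: "Minv * A * M = B'" and w: "w \<in> carrier_vec n"
  shows "A ^\<^sub>m k *\<^sub>v (M *\<^sub>v w) = M *\<^sub>v (B' ^\<^sub>m k *\<^sub>v w)"
proof -
  have B': "B' \<in> carrier_mat n n" using conj M Minv A by auto
  have AM: "A * M = M * B'"
  proof -
    have "M * B' = (M * Minv) * (A * M)" unfolding conj[symmetric] using M Minv A
      by (simp add: assoc_mult_mat[of _ n n _ n _ n])
    thus ?thesis using MMinv A M by simp
  qed
  have pow: "A ^\<^sub>m k * M = M * B' ^\<^sub>m k"
  proof (induct k)
    case 0 then show ?case using M A B' by simp
  next
    case (Suc k)
    have "A ^\<^sub>m Suc k * M = A ^\<^sub>m k * (A * M)"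
      using A M by (simp add: assoc_mult_mat[of _ n n _ n _ n])
    also have "\<dots> = (A ^\<^sub>m k * M) * B'"
      unfolding AM using A M B' by (simp add: assoc_mult_mat[of _ n n _ n _ n])
    also have "\<dots> = M * B' ^\<^sub>m Suc k"
      unfolding Suc using M B' by (simp add: assoc_mult_mat[of _ n n _ n _ n])
    finally show ?case .
  qed
  have "A ^\<^sub>m k *\<^sub>v (M *\<^sub>v w) = (A ^\<^sub>m k * M) *\<^sub>v w"
    by (rule assoc_mult_mat_vec[symmetric]) (use A M w in auto)
  also have "\<dots> = M *\<^sub>v (B' ^\<^sub>m k *\<^sub>v w)"
    unfolding pow by (rule assoc_mult_mat_vec) (use M B' w in auto)
  finally show ?thesis .
qed

lemma mult_mat_vec_sum:
  assumes A: "A \<in> carrier_mat n n" and v: "\<And>j. j \<in> S \<Longrightarrow> v j \<in> carrier_vec n"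
  shows "A *\<^sub>v vec n (\<lambda>i. \<Sum>j\<in>S. v j $ i) = vec n (\<lambda>i. \<Sum>j\<in>S. (A *\<^sub>v v j) $ i)"
proof (rule eq_vecI)
  fix i assume "i < dim_vec (vec n (\<lambda>i. \<Sum>j\<in>S. (A *\<^sub>v v j) $ i))"
  hence i: "i < n" by simp
  have dim_v[simp]: "dim_vec (v j) = n" if "j \<in> S" for j using v[OF that] by auto
  have "(A *\<^sub>v vec n (\<lambda>i. \<Sum>j\<in>S. v j $ i)) $ i = (\<Sum>k<n. A $$ (i,k) * (\<Sum>j\<in>S. v j $ k))"
    using A i by (simp add: scalar_prod_def lessThan_atLeast0)
  also have "\<dots> = (\<Sum>j\<in>S. \<Sum>k<n. A $$ (i,k) * v j $ k)"
    by (simp add: sum_distrib_left sum.swap[of _ S])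
  also have "\<dots> = (\<Sum>j\<in>S. (A *\<^sub>v v j) $ i)"
    using A i v by (intro sum.cong refl) (auto simp: scalar_prod_def lessThan_atLeast0)
  finally show "(A *\<^sub>v vec n (\<lambda>i. \<Sum>j\<in>S. v j $ i)) $ i = vec n (\<lambda>i. \<Sum>j\<in>S. (A *\<^sub>v v j) $ i) $ i"
    using i by simp
qed (use A in simp)

lemma mult_mat_vec_abs_bound:
  fixes P :: "real mat"
  assumes P: "P \<in> carrier_mat n n" and v: "v \<in> carrier_vec n" and i: "i < n"
    and P_small: "\<And>k. k < n \<Longrightarrow> \<bar>P $$ (i,k)\<bar> \<le> \<delta>"
    and v_bound: "\<And>k. k < n \<Longrightarrow> \<bar>v $ k\<bar> \<le> b"
  shows "\<bar>(P *\<^sub>v v) $ i\<bar> \<le> real n * (\<delta> * b)"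
proof -
  have "\<bar>(P *\<^sub>v v) $ i\<bar> = \<bar>\<Sum>k<n. P $$ (i,k) * v $ k\<bar>"
    using P v i by (simp add: scalar_prod_def lessThan_atLeast0)
  also have "\<dots> \<le> (\<Sum>k<n. \<bar>P $$ (i,k)\<bar> * \<bar>v $ k\<bar>)"
    by (rule order.trans[OF sum_abs]) (simp add: abs_mult)
  also have "\<dots> \<le> (\<Sum>k<n. \<delta> * b)"
    using P_small v_bound by (intro sum_mono mult_mono) (auto intro: order.trans[OF abs_ge_zero])
  finally show ?thesis by simp
qed

section \<open>Inverses of integer dilation matrices and the decay of their powers\<close>

text \<open>An integer dilation matrix is invertible over the reals (via its adjugate), because
  \<open>0\<close> is not one of its eigenvalues.\<close>

lemma int_dilation_matrix_real_inverse:
  fixes B :: "int mat"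
  assumes "int_dilation_matrix n B"
  obtains C where "C \<in> carrier_mat n n"
    "map_mat real_of_int B * C = 1\<^sub>m n" "C * map_mat real_of_int B = 1\<^sub>m n"
proof -
  let ?Bc = "map_mat complex_of_int B"
  let ?Br = "map_mat real_of_int B"
  have B: "B \<in> carrier_mat n n" and ev: "\<And>k. eigenvalue ?Bc k \<Longrightarrow> cmod k > 1"
    using assms unfolding int_dilation_matrix_def by auto
  have Bc: "?Bc \<in> carrier_mat n n" and Br: "?Br \<in> carrier_mat n n" using B by auto
  have "det ?Bc \<noteq> 0"
  proof
    assume "det ?Bc = 0"
    then obtain v where v: "v \<in> carrier_vec n" "v \<noteq> 0\<^sub>v n" "?Bc *\<^sub>v v = 0\<^sub>v n"
      using det_0_iff_vec_prod_zero[OF Bc] by auto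
    have "eigenvalue ?Bc 0" unfolding eigenvalue_def eigenvector_def
      using v B by (intro exI[of _ v]) auto
    from ev[OF this] show False by simp
  qed
  hence d: "det ?Br \<noteq> 0" by simp
  define C where "C = (1 / det ?Br) \<cdot>\<^sub>m adj_mat ?Br"
  have adj: "adj_mat ?Br \<in> carrier_mat n n" using adj_mat[OF Br] by auto
  show ?thesis
  proof
    show "C \<in> carrier_mat n n" unfolding C_def using adj by auto
    show "?Br * C = 1\<^sub>m n" unfolding C_def using adj_mat[OF Br] d Br adj
      by (simp add: mult_smult_distrib, intro eq_matI, auto)
    show "C * ?Br = 1\<^sub>m n" unfolding C_def using adj_mat[OF Br] d Br adj
      by (simp add: mult_smult_assoc_mat, intro eq_matI, auto)
  qed
qed

lemma eigenvalue_of_inverse: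
  fixes A C :: "'a :: field mat"
  assumes A: "A \<in> carrier_mat n n" and C: "C \<in> carrier_mat n n"
    and AC: "A * C = 1\<^sub>m n" and ev: "eigenvalue C \<mu>"
  shows "\<mu> \<noteq> 0" "eigenvalue A (1 / \<mu>)"
proof -
  from ev obtain v where v: "v \<in> carrier_vec n" "v \<noteq> 0\<^sub>v n" "C *\<^sub>v v = \<mu> \<cdot>\<^sub>v v"
    unfolding eigenvalue_def eigenvector_def using C by auto
  have "v = A *\<^sub>v (C *\<^sub>v v)" using AC v A C
    by (metis assoc_mult_mat_vec one_mult_mat_vec)
  also have "\<dots> = \<mu> \<cdot>\<^sub>v (A *\<^sub>v v)" using v A by (simp add: mult_mat_vec)
  finally have v_eq: "v = \<mu> \<cdot>\<^sub>v (A *\<^sub>v v)" .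
  show mu0: "\<mu> \<noteq> 0"
  proof
    assume "\<mu> = 0"
    hence "v = 0\<^sub>v n" using v_eq A v by (intro eq_vecI) (auto simp: vec_eq_iff)
    thus False using v by simp
  qed
  have "A *\<^sub>v v = (1 / \<mu>) \<cdot>\<^sub>v v"
    using arg_cong[OF v_eq, of "\<lambda>w. (1 / \<mu>) \<cdot>\<^sub>v w"] mu0 by (simp add: smult_smult_assoc)
  thus "eigenvalue A (1 / \<mu>)" unfolding eigenvalue_def eigenvector_def
    using v A by (intro exI[of _ v]) auto
qed

lemma inverse_dilation_eigenvalues:
  fixes B :: "int mat" and C :: "real mat"
  assumes dil: "int_dilation_matrix n B" and C: "C \<in> carrier_mat n n"
    and BC: "map_mat real_of_int B * C = 1\<^sub>m n"
    and ev: "eigenvalue (map_mat complex_of_real C) \<mu>"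
  shows "cmod \<mu> < 1"
proof -
  let ?Bc = "map_mat complex_of_int B"
  let ?Cc = "map_mat complex_of_real C"
  have B: "B \<in> carrier_mat n n" using dil unfolding int_dilation_matrix_def by auto
  have Br: "map_mat real_of_int B \<in> carrier_mat n n" using B by auto
  have "?Bc = map_mat complex_of_real (map_mat real_of_int B)" using B by (intro eq_matI) auto
  hence "?Bc * ?Cc = 1\<^sub>m n"
    using of_real_hom.mat_hom_mult[OF Br C] BC of_real_hom.mat_hom_one by metis
  from eigenvalue_of_inverse[OF _ _ this ev] B C
  have "\<mu> \<noteq> 0" "eigenvalue ?Bc (1 / \<mu>)" by auto
  with dil show ?thesis unfolding int_dilation_matrix_def by (auto simp: norm_divide divide_simps)
qed

lemma eigenvalue_smult:
  fixes C :: "'a :: field mat"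
  assumes C: "C \<in> carrier_mat n n" and c: "c \<noteq> 0" and ev: "eigenvalue (c \<cdot>\<^sub>m C) l"
  shows "eigenvalue C (l / c)"
proof -
  from ev obtain v where v: "v \<in> carrier_vec n" "v \<noteq> 0\<^sub>v n" "(c \<cdot>\<^sub>m C) *\<^sub>v v = l \<cdot>\<^sub>v v"
    unfolding eigenvalue_def eigenvector_def using C by auto
  have "(c \<cdot>\<^sub>m C) *\<^sub>v v = c \<cdot>\<^sub>v (C *\<^sub>v v)"
    using v(1) C by (intro eq_vecI) (auto simp: scalar_prod_def sum_distrib_left ac_simps)
  hence "C *\<^sub>v v = (l / c) \<cdot>\<^sub>v v"
    using arg_cong[OF v(3), of "\<lambda>w. (1 / c) \<cdot>\<^sub>v w"] c by (simp add: smult_smult_assoc)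
  thus ?thesis unfolding eigenvalue_def eigenvector_def using v C by (intro exI[of _ v]) auto
qed

text \<open>Rescaling by \<open>c\<close> keeps the spectral
  radius below 1, so the Jordan-normal-form bound applies to the rescaled powers.\<close>

lemma pow_entries_geometric_decay:
  fixes C :: "real mat"
  assumes C: "C \<in> carrier_mat n n" and n: "n > 0"
    and ev: "\<And>\<mu>. eigenvalue (map_mat complex_of_real C) \<mu> \<Longrightarrow> cmod \<mu> < 1"
  obtains c K where "c > 1" "\<And>k i j. i < n \<Longrightarrow> j < n \<Longrightarrow> c ^ k * \<bar>(C ^\<^sub>m k) $$ (i,j)\<bar> \<le> K"
proof -
  let ?Cc = "map_mat complex_of_real C"
  have Cc: "?Cc \<in> carrier_mat n n" using C by auto
  define \<rho> where "\<rho> = spectral_radius ?Cc"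
  from spectral_radius_mem_max[OF Cc n] have rho_mem: "\<rho> \<in> norm ` spectrum ?Cc"
    and rho_max: "\<And>a. a \<in> norm ` spectrum ?Cc \<Longrightarrow> a \<le> \<rho>" unfolding \<rho>_def by auto
  from rho_mem have rho: "\<rho> < 1" "\<rho> \<ge> 0" using ev unfolding spectrum_def by auto
  define c where "c = 2 / (1 + \<rho>)"
  have c: "c > 1" "c * \<rho> < 1" using rho unfolding c_def by (auto simp: field_simps)
  define D where "D = complex_of_real c \<cdot>\<^sub>m ?Cc"
  have D: "D \<in> carrier_mat n n" unfolding D_def using Cc by auto
  have "cmod l \<le> c * \<rho>" if "eigenvalue D l" for l
  proof -
    have "eigenvalue ?Cc (l / c)"
      using eigenvalue_smult[OF Cc _ that[unfolded D_def]] c by auto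
    hence "cmod (l / c) \<le> \<rho>" using rho_max unfolding spectrum_def by auto
    thus ?thesis using c by (simp add: norm_divide field_simps)
  qed
  moreover have "spectral_radius D \<in> norm ` spectrum D" using spectral_radius_mem_max(1)[OF D n] .
  ultimately have "spectral_radius D < 1" using c unfolding spectrum_def by force
  from spectral_radius_jnf_norm_bound_less_1_upper_triangular[OF D this]
  obtain K where K: "\<And>k. norm_bound (D ^\<^sub>m k) K" by auto
  show ?thesis
  proof (rule that[OF c(1)])
    fix i j k assume ij: "i < n" "j < n"
    have "D ^\<^sub>m k = complex_of_real (c ^ k) \<cdot>\<^sub>m map_mat complex_of_real (C ^\<^sub>m k)"
      unfolding D_def pow_smult_mat[OF Cc] of_real_hom.mat_hom_pow[OF C] by simp
    hence "(D ^\<^sub>m k) $$ (i,j) = complex_of_real (c ^ k * (C ^\<^sub>m k) $$ (i,j))"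
      using ij C by simp
    hence "norm ((D ^\<^sub>m k) $$ (i,j)) = c ^ k * \<bar>(C ^\<^sub>m k) $$ (i,j)\<bar>"
      using c(1) by (simp only: norm_of_real abs_mult) simp
    moreover have "norm ((D ^\<^sub>m k) $$ (i,j)) \<le> K"
      using K[of k] ij D unfolding norm_bound_def by auto
    ultimately show "c ^ k * \<bar>(C ^\<^sub>m k) $$ (i,j)\<bar> \<le> K" by simp
  qed
qed

lemma pow_entries_eventually_small:
  fixes C :: "real mat"
  assumes C: "C \<in> carrier_mat n n" and n: "n > 0"
    and ev: "\<And>\<mu>. eigenvalue (map_mat complex_of_real C) \<mu> \<Longrightarrow> cmod \<mu> < 1"
    and eps: "\<epsilon> > 0"
  obtains \<beta> where "\<beta> \<ge> 1" "\<And>i j. i < n \<Longrightarrow> j < n \<Longrightarrow> \<bar>(C ^\<^sub>m \<beta>) $$ (i,j)\<bar> \<le> \<epsilon>"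
proof -
  obtain c K where c: "c > 1"
    and bound: "\<And>k i j. i < n \<Longrightarrow> j < n \<Longrightarrow> c ^ k * \<bar>(C ^\<^sub>m k) $$ (i,j)\<bar> \<le> K"
    using pow_entries_geometric_decay[OF C n ev] by blast
  obtain k where k: "K / \<epsilon> < c ^ k" using real_arch_pow[OF c] by blast
  have "K \<le> \<epsilon> * c ^ Suc k"
  proof -
    have "K < \<epsilon> * c ^ k" using k eps by (simp add: field_simps)
    also have "\<dots> \<le> \<epsilon> * c ^ Suc k" using c eps by (intro mult_left_mono) auto
    finally show ?thesis by simp
  qed
  have "\<bar>(C ^\<^sub>m Suc k) $$ (i,j)\<bar> \<le> \<epsilon>" if "i < n" "j < n" for i j
  proof -
    have "c ^ Suc k * \<bar>(C ^\<^sub>m Suc k) $$ (i,j)\<bar> \<le> c ^ Suc k * \<epsilon>"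
      using bound[OF that, of "Suc k"] \<open>K \<le> \<epsilon> * c ^ Suc k\<close> by (simp add: mult.commute)
    moreover have "c ^ Suc k > 0" using c by simp
    ultimately show ?thesis by (rule mult_left_le_imp_le)
  qed
  with that[of "Suc k"] show ?thesis by auto
qed

lemma dilation_power_small_inverse:
  fixes B :: "int mat"
  assumes dil: "int_dilation_matrix n B"
  obtains \<beta> P where "\<beta> \<ge> 1" "P \<in> carrier_mat n n"
    "map_mat real_of_int (B ^\<^sub>m \<beta>) * P = 1\<^sub>m n"
    "\<And>i j. i < n \<Longrightarrow> j < n \<Longrightarrow> \<bar>P $$ (i,j)\<bar> \<le> 1 / (4 * real n)"
proof -
  have B: "B \<in> carrier_mat n n" using dil unfolding int_dilation_matrix_def by auto
  obtain C where C: "C \<in> carrier_mat n n"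
    and BC: "map_mat real_of_int B * C = 1\<^sub>m n" and CB: "C * map_mat real_of_int B = 1\<^sub>m n"
    using int_dilation_matrix_real_inverse[OF dil] by blast
  obtain \<beta> where \<beta>: "\<beta> \<ge> 1"
    and small: "\<And>i j. i < n \<Longrightarrow> j < n \<Longrightarrow> \<bar>(C ^\<^sub>m \<beta>) $$ (i,j)\<bar> \<le> 1 / (4 * real n)"
  proof (cases "n = 0")
    case True
    then show ?thesis using that[of 1] by simp
  next
    case False
    then have "n > 0" "1 / (4 * real n) > 0" by simp_all
    from pow_entries_eventually_small[OF C this(1) inverse_dilation_eigenvalues[OF dil C BC] this(2)]
    show ?thesis using that by blast
  qed
  have inv: "map_mat real_of_int (B ^\<^sub>m \<beta>) * C ^\<^sub>m \<beta> = 1\<^sub>m n"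
    unfolding of_int_hom.mat_hom_pow[OF B] using B C BC CB by (intro pow_inverse_mat) auto
  show ?thesis using that[OF \<beta> pow_carrier_mat[OF C] inv] small by blast
qed

section \<open>Radix representations\<close>

definition radix_rep :: "nat \<Rightarrow> 'a::real_field mat \<Rightarrow> 'a mat \<Rightarrow> nat \<Rightarrow> 'a vec \<Rightarrow> bool" where
  "radix_rep n M A \<beta> x \<longleftrightarrow> (\<exists>N::nat. \<exists>d :: nat \<Rightarrow> 'a vec.
       (\<forall>j\<le>N. d j \<in> digit_set n M A \<beta>) \<and>
       x = vec n (\<lambda>i. \<Sum>j\<le>N. ((A ^\<^sub>m (\<beta> * j)) *\<^sub>v d j) $ i))"

lemma digit_carrier:
  assumes "M \<in> carrier_mat n n" "d \<in> digit_set n M A \<beta>"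
  shows "d \<in> carrier_vec n"
  using assms unfolding digit_set_def lattice_def by auto

lemma zero_digit:
  assumes M: "M \<in> carrier_mat n n" and A: "A \<in> carrier_mat n n"
  shows "0\<^sub>v n \<in> digit_set n M A \<beta>"
proof -
  have "0\<^sub>v n = M *\<^sub>v vec n (\<lambda>i. of_real 0)"
    using M by (intro eq_vecI) (auto simp: scalar_prod_def)
  hence "0\<^sub>v n \<in> fund_dom n M" unfolding fund_dom_def by (intro CollectI exI[of _ "\<lambda>_. 0"]) simp
  moreover have "0\<^sub>v n = A ^\<^sub>m \<beta> *\<^sub>v 0\<^sub>v n" using A by (intro eq_vecI) auto
  moreover have "0\<^sub>v n \<in> lattice n M" unfolding lattice_def
    by (rule CollectI, rule exI[of _ "0\<^sub>v n"]) (use M in auto)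
  ultimately show ?thesis unfolding digit_set_def by blast
qed

lemma radix_rep_zero:
  assumes M: "M \<in> carrier_mat n n" and A: "A \<in> carrier_mat n n"
  shows "radix_rep n M A \<beta> (0\<^sub>v n)"
  unfolding radix_rep_def
  by (rule exI[of _ 0], rule exI[of _ "\<lambda>_. 0\<^sub>v n"]) (use zero_digit[OF M A] A in auto)

lemma radix_rep_step:
  assumes M: "M \<in> carrier_mat n n" and A: "A \<in> carrier_mat n n"
    and x: "radix_rep n M A \<beta> x" and d0: "d0 \<in> digit_set n M A \<beta>"
  shows "radix_rep n M A \<beta> (d0 + A ^\<^sub>m \<beta> *\<^sub>v x)"
proof -
  from x obtain N d where d: "\<And>j. j \<le> N \<Longrightarrow> d j \<in> digit_set n M A \<beta>"
    and x_eq: "x = vec n (\<lambda>i. \<Sum>j\<le>N. ((A ^\<^sub>m (\<beta> * j)) *\<^sub>v d j) $ i)"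
    unfolding radix_rep_def by auto
  define d' where "d' = (\<lambda>j. case j of 0 \<Rightarrow> d0 | Suc j \<Rightarrow> d j)"
  have dc: "\<And>j. j \<le> N \<Longrightarrow> d j \<in> carrier_vec n" using d digit_carrier[OF M] by blast
  have d0c: "d0 \<in> carrier_vec n" using d0 digit_carrier[OF M] by blast
  have shift: "A ^\<^sub>m \<beta> *\<^sub>v ((A ^\<^sub>m (\<beta> * j)) *\<^sub>v d j) = (A ^\<^sub>m (\<beta> * Suc j)) *\<^sub>v d j"
    if "j \<le> N" for j
    using pow_mat_add[OF A, of \<beta> "\<beta> * j"]
    by (simp, intro assoc_mult_mat_vec[symmetric]) (use A dc[OF that] in auto)
  have "A ^\<^sub>m \<beta> *\<^sub>v x = vec n (\<lambda>i. \<Sum>j\<le>N. (A ^\<^sub>m \<beta> *\<^sub>v ((A ^\<^sub>m (\<beta> * j)) *\<^sub>v d j)) $ i)"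
    unfolding x_eq using A dc by (intro mult_mat_vec_sum) (auto intro!: mult_mat_vec_carrier[of _ n n])
  also have "\<dots> = vec n (\<lambda>i. \<Sum>j\<le>N. ((A ^\<^sub>m (\<beta> * Suc j)) *\<^sub>v d' (Suc j)) $ i)"
    using shift by (intro eq_vecI) (auto simp: d'_def)
  moreover have "vec n (\<lambda>i. \<Sum>j\<le>Suc N. ((A ^\<^sub>m (\<beta> * j)) *\<^sub>v d' j) $ i) =
      d0 + vec n (\<lambda>i. \<Sum>j\<le>N. ((A ^\<^sub>m (\<beta> * Suc j)) *\<^sub>v d' (Suc j)) $ i)"
    unfolding sum.atMost_Suc_shift using d0c A by (intro eq_vecI) (auto simp: d'_def)
  ultimately have "d0 + A ^\<^sub>m \<beta> *\<^sub>v x = vec n (\<lambda>i. \<Sum>j\<le>Suc N. ((A ^\<^sub>m (\<beta> * j)) *\<^sub>v d' j) $ i)"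
    by simp
  moreover have "\<forall>j\<le>Suc N. d' j \<in> digit_set n M A \<beta>"
    using d d0 unfolding d'_def by (auto split: nat.split)
  ultimately show ?thesis unfolding radix_rep_def by blast
qed

section \<open>Division with rounded remainder\<close>

lemma rounded_division:
  fixes E :: "int mat" and P :: "real mat" and z :: "int vec"
  assumes E: "E \<in> carrier_mat n n" and P: "P \<in> carrier_mat n n"
    and EP: "map_mat real_of_int E * P = 1\<^sub>m n"
    and P_small: "\<And>i j. i < n \<Longrightarrow> j < n \<Longrightarrow> \<bar>P $$ (i,j)\<bar> \<le> 1 / (4 * real n)"
    and z: "z \<in> carrier_vec n" and z_bound: "\<And>i. i < n \<Longrightarrow> \<bar>z $ i\<bar> \<le> int m + 1"
  obtains q r where "q \<in> carrier_vec n" "\<And>i. i < n \<Longrightarrow> \<bar>q $ i\<bar> \<le> int m"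
    "r \<in> carrier_vec n" "\<And>i. i < n \<Longrightarrow> -1/2 \<le> r $ i \<and> r $ i < 1/2"
    "map_vec real_of_int (z - E *\<^sub>v q) = map_mat real_of_int E *\<^sub>v r"
proof -
  let ?Er = "map_mat real_of_int E"
  define zr where "zr = map_vec real_of_int z"
  define y where "y = P *\<^sub>v zr"
  define q where "q = vec n (\<lambda>i. \<lfloor>y $ i + 1/2\<rfloor>)"
  define r where "r = y - map_vec real_of_int q"
  have Er: "?Er \<in> carrier_mat n n" using E by simp
  have zr: "zr \<in> carrier_vec n" unfolding zr_def using z by simp
  have y: "y \<in> carrier_vec n" unfolding y_def using P zr by simp
  have q: "q \<in> carrier_vec n" unfolding q_def by simp
  have r: "r \<in> carrier_vec n" unfolding r_def using y q by simp
  have r_box: "-1/2 \<le> r $ i \<and> r $ i < 1/2" if i: "i < n" for i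
    unfolding r_def q_def using i y by simp linarith
  have y_bound: "\<bar>y $ i\<bar> \<le> (real m + 1) / 4" if i: "i < n" for i
  proof -
    have "\<bar>y $ i\<bar> \<le> real n * (1 / (4 * real n) * (real m + 1))"
      unfolding y_def using P zr i P_small[OF i]
    proof (rule mult_mat_vec_abs_bound)
      show "\<bar>zr $ k\<bar> \<le> real m + 1" if "k < n" for k
        using z_bound[OF that] that z unfolding zr_def by simp
    qed
    thus ?thesis using i by simp
  qed
  have q_bound: "\<bar>q $ i\<bar> \<le> int m" if i: "i < n" for i
  proof -
    have "real_of_int (q $ i) \<le> y $ i + 1/2" "y $ i + 1/2 < real_of_int (q $ i) + 1"
      unfolding q_def using i by (auto simp: of_int_floor_le)
    thus ?thesis using y_bound[OF i] by (auto simp: abs_le_iff)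
  qed
  have "map_vec real_of_int (E *\<^sub>v q) = ?Er *\<^sub>v map_vec real_of_int q"
    by (rule of_int_hom.mult_mat_vec_hom[OF E q])
  hence "map_vec real_of_int (z - E *\<^sub>v q) = zr - ?Er *\<^sub>v map_vec real_of_int q"
    unfolding zr_def using z E q by (intro eq_vecI) (auto simp flip: of_int_hom.mult_mat_vec_hom)
  also have "zr = ?Er *\<^sub>v y"
    unfolding y_def using Er P zr EP by (simp add: assoc_mult_mat_vec[symmetric, of _ n n P n])
  also have "?Er *\<^sub>v y - ?Er *\<^sub>v map_vec real_of_int q = ?Er *\<^sub>v r"
    unfolding r_def using Er y q by (simp add: mult_minus_distrib_mat_vec)
  finally show ?thesis using that q q_bound r r_box by blast
qed

text \<open>For the rest of this section \<open>A = M B' M\<^sup>-\<^sup>1\<close> where \<open>B'\<close> is the image of the integer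
  matrix \<open>B\<close>, i.e. \<open>B\<close> is the matrix of \<open>A\<close> in the coordinates of \<open>\<Gamma> = M \<int>\<^sup>n\<close>.\<close>

context
  fixes n :: nat and M Minv A :: "'a::real_field mat" and B :: "int mat"
  assumes M: "M \<in> carrier_mat n n" and Minv: "Minv \<in> carrier_mat n n"
    and A: "A \<in> carrier_mat n n" and MMinv: "M * Minv = 1\<^sub>m n"
    and conj: "Minv * A * M = map_mat of_int B" and B: "B \<in> carrier_mat n n"
begin

lemma lattice_pow_action:
  assumes w: "w \<in> carrier_vec n"
  shows "A ^\<^sub>m \<beta> *\<^sub>v (M *\<^sub>v map_vec of_int w) = M *\<^sub>v map_vec of_int (B ^\<^sub>m \<beta> *\<^sub>v w)"
proof -
  have "map_vec (of_int :: int \<Rightarrow> 'a) (B ^\<^sub>m \<beta> *\<^sub>v w) = map_mat of_int (B ^\<^sub>m \<beta>) *\<^sub>v map_vec of_int w"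
    using B w by (intro of_int_hom.mult_mat_vec_hom) auto
  then show ?thesis using conj_pow_mult_vec[OF M Minv A MMinv conj, of "map_vec of_int w" \<beta>] w
    by (simp add: of_int_hom.mat_hom_pow[OF B, symmetric])
qed

lemma remainder_is_digit:
  assumes e: "e \<in> carrier_vec n" and r: "r \<in> carrier_vec n"
    and r_box: "\<And>i. i < n \<Longrightarrow> -1/2 \<le> r $ i \<and> r $ i < 1/2"
    and e_eq: "map_vec real_of_int e = map_mat real_of_int (B ^\<^sub>m \<beta>) *\<^sub>v r"
  shows "M *\<^sub>v map_vec of_int e \<in> digit_set n M A \<beta>"
proof -
  let ?B' = "map_mat (of_int :: int \<Rightarrow> 'a) B"
  have rv: "vec n (\<lambda>i. of_real (r $ i)) = (map_vec of_real r :: 'a vec)"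
    using r by (intro eq_vecI) auto
  have B'_pow: "?B' ^\<^sub>m \<beta> = map_mat of_real (map_mat real_of_int (B ^\<^sub>m \<beta>))"
    using B by (intro eq_matI) (auto simp: of_int_hom.mat_hom_pow[OF B, symmetric])
  have "A ^\<^sub>m \<beta> *\<^sub>v (M *\<^sub>v map_vec of_real r) = M *\<^sub>v (?B' ^\<^sub>m \<beta> *\<^sub>v map_vec of_real r)"
    using conj_pow_mult_vec[OF M Minv A MMinv conj] r by simp
  also have "?B' ^\<^sub>m \<beta> *\<^sub>v map_vec of_real r = map_vec of_real (map_vec real_of_int e)"
    unfolding B'_pow e_eq using B r by (intro of_real_hom.mult_mat_vec_hom[symmetric]) auto
  also have "map_vec of_real (map_vec real_of_int e) = (map_vec of_int e :: 'a vec)"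
    using e by (intro eq_vecI) auto
  finally have "M *\<^sub>v map_vec of_int e = A ^\<^sub>m \<beta> *\<^sub>v (M *\<^sub>v vec n (\<lambda>i. of_real (r $ i)))"
    unfolding rv ..
  moreover have "M *\<^sub>v vec n (\<lambda>i. of_real (r $ i)) \<in> fund_dom n M"
    unfolding fund_dom_def using r_box by blast
  moreover have "M *\<^sub>v map_vec of_int e \<in> lattice n M"
    unfolding lattice_def using e by force
  ultimately show ?thesis unfolding digit_set_def by blast
qed

lemma radix_rep_lattice_point:
  fixes P :: "real mat"
  assumes P: "P \<in> carrier_mat n n"
    and inv: "map_mat real_of_int (B ^\<^sub>m \<beta>) * P = 1\<^sub>m n"
    and P_small: "\<And>i j. i < n \<Longrightarrow> j < n \<Longrightarrow> \<bar>P $$ (i,j)\<bar> \<le> 1 / (4 * real n)"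
  shows "z \<in> carrier_vec n \<Longrightarrow> (\<And>i. i < n \<Longrightarrow> \<bar>z $ i\<bar> \<le> int m) \<Longrightarrow>
    radix_rep n M A \<beta> (M *\<^sub>v map_vec of_int z)"
proof (induct m arbitrary: z)
  case 0
  hence "M *\<^sub>v map_vec of_int z = 0\<^sub>v n" using M by (intro eq_vecI) (auto simp: scalar_prod_def)
  thus ?case using radix_rep_zero[OF M A] by simp
next
  case (Suc m z)
  have Bp: "B ^\<^sub>m \<beta> \<in> carrier_mat n n" using B by simp
  have z_bound: "\<bar>z $ i\<bar> \<le> int m + 1" if "i < n" for i using Suc(3)[OF that] by simp
  obtain q r where q: "q \<in> carrier_vec n" "\<And>i. i < n \<Longrightarrow> \<bar>q $ i\<bar> \<le> int m"
    and r: "r \<in> carrier_vec n" "\<And>i. i < n \<Longrightarrow> -1/2 \<le> r $ i \<and> r $ i < 1/2"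
    and e_eq: "map_vec real_of_int (z - B ^\<^sub>m \<beta> *\<^sub>v q) = map_mat real_of_int (B ^\<^sub>m \<beta>) *\<^sub>v r"
    using rounded_division[OF Bp P inv P_small Suc(2) z_bound] by blast
  define e where "e = z - B ^\<^sub>m \<beta> *\<^sub>v q"
  have e: "e \<in> carrier_vec n" unfolding e_def using Suc(2) Bp q by simp
  have digit: "M *\<^sub>v map_vec of_int e \<in> digit_set n M A \<beta>"
    using remainder_is_digit[OF e r] e_eq unfolding e_def by blast
  have "radix_rep n M A \<beta> (M *\<^sub>v map_vec of_int e + A ^\<^sub>m \<beta> *\<^sub>v (M *\<^sub>v map_vec of_int q))"
    using radix_rep_step[OF M A Suc(1)[OF q] digit] .
  moreover have "M *\<^sub>v map_vec of_int z =
      M *\<^sub>v map_vec of_int e + A ^\<^sub>m \<beta> *\<^sub>v (M *\<^sub>v map_vec of_int q)"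
  proof -
    have "map_vec (of_int :: int \<Rightarrow> 'a) z = map_vec of_int e + map_vec of_int (B ^\<^sub>m \<beta> *\<^sub>v q)"
      unfolding e_def using Suc(2) Bp q by (intro eq_vecI) auto
    thus ?thesis unfolding lattice_pow_action[OF q(1)] using M e Bp q
      by (simp add: mult_add_distrib_mat_vec[of M n n])
  qed
  ultimately show ?case by simp
qed

end

lemma lattice_int_coords:
  assumes "x \<in> lattice n M"
  obtains z :: "int vec" where "z \<in> carrier_vec n" "x = M *\<^sub>v map_vec of_int z"
proof -
  from assms obtain w where x: "x = M *\<^sub>v w" and w: "w \<in> carrier_vec n"
    and w_int: "\<And>i. i < n \<Longrightarrow> w $ i \<in> \<int>"
    unfolding lattice_def by blast
  define z where "z = vec n (\<lambda>i. SOME k. w $ i = of_int k)"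
  have "map_vec of_int z = w"
  proof (rule eq_vecI)
    fix i assume "i < dim_vec w"
    hence i: "i < n" using w by simp
    from w_int[OF i] obtain k where "w $ i = of_int k" by (auto elim: Ints_cases)
    hence "w $ i = of_int (SOME k. w $ i = of_int k)" by (rule someI)
    thus "map_vec of_int z $ i = w $ i" unfolding z_def using i by simp
  qed (use w in \<open>simp add: z_def\<close>)
  thus ?thesis using that[of z] x by (simp add: z_def)
qed

theorem mainTheorem11:
  fixes M A :: "'a::real_normed_field mat" and n :: nat
  assumes "M \<in> carrier_mat n n" and "invertible_mat M"
    and "dilation_matrix_for n M A"
  shows "\<exists>\<beta>::nat. \<beta> \<ge> 1 \<and>
    (\<forall>x \<in> lattice n M. \<exists>N::nat. \<exists>d :: nat \<Rightarrow> 'a vec.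
       (\<forall>j\<le>N. d j \<in> digit_set n M A \<beta>) \<and>
       x = vec n (\<lambda>i. \<Sum>j\<le>N. ((A ^\<^sub>m (\<beta> * j)) *\<^sub>v d j) $ i))"
proof -
  from assms(3) obtain Minv B where A: "A \<in> carrier_mat n n" and Minv: "Minv \<in> carrier_mat n n"
    and MMinv: "M * Minv = 1\<^sub>m n" and dil: "int_dilation_matrix n B"
    and conj: "Minv * A * M = map_mat of_int B"
    unfolding dilation_matrix_for_def by blast
  obtain \<beta> P where \<beta>: "\<beta> \<ge> 1" and P: "P \<in> carrier_mat n n"
    and inv: "map_mat real_of_int (B ^\<^sub>m \<beta>) * P = 1\<^sub>m n"
    and small: "\<And>i j. i < n \<Longrightarrow> j < n \<Longrightarrow> \<bar>P $$ (i,j)\<bar> \<le> 1 / (4 * real n)"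
    using dilation_power_small_inverse[OF dil] by blast
  have B: "B \<in> carrier_mat n n" using dil unfolding int_dilation_matrix_def by auto
  have "radix_rep n M A \<beta> x" if x_lat: "x \<in> lattice n M" for x
  proof -
    obtain z where z: "z \<in> carrier_vec n" and x: "x = M *\<^sub>v map_vec of_int z"
      using lattice_int_coords[OF x_lat] by blast
    \<comment> \<open>any bound on the coordinates of \<open>z\<close> will do for the induction\<close>
    have "\<bar>z $ i\<bar> \<le> int (nat (\<Sum>k<n. \<bar>z $ k\<bar>))" if "i < n" for i
      using member_le_sum[of i "{..<n}" "\<lambda>k. \<bar>z $ k\<bar>"] that by auto
    from radix_rep_lattice_point[OF assms(1) Minv A MMinv conj B P inv small z this]
    show ?thesis unfolding x by simp
  qed
  with \<beta> show ?thesis unfolding radix_rep_def by blast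
qed

end
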